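(* Let $G\in\mathscr M_+([0,\infty))$ have no atoms in $(0,\infty)$ (i.e. $G(\{x\})=0$ for all $x>0$) and satisfy $\int_{(0,\infty)}\frac{G(x)}{\sqrt x}dx<\infty$. Then for every admissible family $(\varphi_\varepsilon)$, $$\lim_{\varepsilon\to0}\mathscr Q_3^{(2)}(\varphi_\varepsilon,G)=0.$$
   Context: $\mathscr M_+([0,\infty))$ is the set of nonnegative finite Radon measures on $[0,\infty)$; we write $\int_A\varphi(x)G(x)dx$ for $\int_A\varphi\,dG$. $C^1_b([0,\infty))$ denotes bounded $C^1$ functions with bounded derivative. For continuous $\varphi$: $\Lambda(\varphi)(x,y)=\varphi(x+y)+\varphi(|x-y|)-2\varphi(\max\{x,y\})$ and $\mathscr Q_3^{(2)}(\varphi,G)=\iint_{(0,\infty)^2}\frac{\Lambda(\varphi)(x,y)}{\sqrt{xy}}G(x)G(y)dxdy$. Admissible family: $(\varphi_\varepsilon)_{\varepsilon>0}$ with $\varphi_\varepsilon(x)=\varphi(x/\varepsilon)$, where $\varphi\in C^1_b([0,\infty))$ is nonnegative and convex with $\varphi(0)=1$ and $\lim_{x\to\infty}\sqrt x\,\varphi(x)=0$. *)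

theory Defs
  imports "HOL-Analysis.Analysis"
begin

text \<open>Nonnegative finite (Radon) measures on [0,\<infinity>), represented as finite Borel measures
  on the real line with no mass on the negative half-line.\<close>
definition nonneg_finite_measure :: "real measure \<Rightarrow> bool" where
  "nonneg_finite_measure G \<longleftrightarrow>
     sets G = sets borel \<and> finite_measure G \<and> emeasure G {..<0} = 0"

definition Lambda :: "(real \<Rightarrow> real) \<Rightarrow> real \<Rightarrow> real \<Rightarrow> real" where
  "Lambda \<phi> x y = \<phi> (x + y) + \<phi> \<bar>x - y\<bar> - 2 * \<phi> (max x y)"

definition Q32 :: "(real \<Rightarrow> real) \<Rightarrow> real measure \<Rightarrow> real" where
  "Q32 \<phi> G = (\<integral>p \<in> {0<..} \<times> {0<..}.
       Lambda \<phi> (fst p) (snd p) / sqrt (fst p * snd p) \<partial>(G \<Otimes>\<^sub>M G))"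

definition C1b_nonneg :: "(real \<Rightarrow> real) \<Rightarrow> bool" where
  "C1b_nonneg \<phi> \<longleftrightarrow> (\<exists>\<phi>'. (\<forall>x\<ge>0. (\<phi> has_real_derivative \<phi>' x) (at x within {0..}))
      \<and> continuous_on {0..} \<phi>' \<and> bounded (\<phi>' ` {0..}) \<and> bounded (\<phi> ` {0..}))"

definition admissible_profile :: "(real \<Rightarrow> real) \<Rightarrow> bool" where
  "admissible_profile \<phi> \<longleftrightarrow> C1b_nonneg \<phi> \<and> (\<forall>x\<ge>0. \<phi> x \<ge> 0) \<and>
      convex_on {0..} \<phi> \<and> \<phi> 0 = 1 \<and> ((\<lambda>x. sqrt x * \<phi> x) \<longlongrightarrow> 0) at_top"

end

theory Submission
  imports Defs
begin

text \<open>For \<open>x \<noteq> y\<close>, all three arguments of \<open>\<Lambda>(\<phi>\<^sub>\<epsilon>)(x, y)\<close> tend to infinity as \<open>\<epsilon> \<rightarrow> 0\<close>, so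
  the integrand tends to \<open>0\<close>; only the diagonal, where \<open>\<phi>(|x - y|/\<epsilon>) = \<phi>(0)\<close>, escapes, and it
  is \<open>G \<otimes> G\<close>-null because \<open>G\<close> has no atoms in \<open>(0,\<infinity>)\<close>. Boundedness of \<open>\<phi>\<close> dominates the
  integrand by \<open>4 sup|\<phi>| / \<surd>(xy)\<close>, which is \<open>G \<otimes> G\<close>-integrable by the moment assumption on
  \<open>G\<close>, and dominated convergence concludes.\<close>

lemma tendsto_0_at_top_if_sqrt_mult_tendsto_0:
  fixes f :: "real \<Rightarrow> real"
  assumes "((\<lambda>x. sqrt x * f x) \<longlongrightarrow> 0) at_top"
  shows "(f \<longlongrightarrow> 0) at_top"
proof -
  have "((\<lambda>x. sqrt x * f x * inverse (sqrt x)) \<longlongrightarrow> 0 * 0) at_top"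
    by (intro tendsto_mult assms tendsto_inverse_0_at_top sqrt_at_top)
  moreover have "\<forall>\<^sub>F x in at_top. sqrt x * f x * inverse (sqrt x) = f x"
    using eventually_gt_at_top[of 0] by eventually_elim simp
  ultimately show ?thesis
    by (simp add: Lim_transform_eventually)
qed

lemma abs_Lambda_le:
  assumes bound: "\<And>z. z \<ge> 0 \<Longrightarrow> \<bar>\<phi> z\<bar> \<le> B" and "x \<ge> 0" "y \<ge> 0"
  shows "\<bar>Lambda \<phi> x y\<bar> \<le> 4 * B"
proof -
  have "\<bar>\<phi> (x + y)\<bar> \<le> B" "\<bar>\<phi> \<bar>x - y\<bar>\<bar> \<le> B" "\<bar>\<phi> (max x y)\<bar> \<le> B"
    using bound \<open>x \<ge> 0\<close> \<open>y \<ge> 0\<close> by auto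
  then show ?thesis
    unfolding Lambda_def by linarith
qed

lemma Lambda_dilation_tendsto_0:
  fixes \<phi> :: "real \<Rightarrow> real"
  assumes lim: "(\<phi> \<longlongrightarrow> 0) at_top" and "x > 0" "y > 0" "x \<noteq> y"
  shows "((\<lambda>t. Lambda (\<lambda>z. \<phi> (z * t)) x y) \<longlongrightarrow> 0) at_top"
proof -
  have dilation: "((\<lambda>t. \<phi> (c * t)) \<longlongrightarrow> 0) at_top" if "c > 0" for c
    using filterlim_tendsto_pos_mult_at_top[OF tendsto_const that filterlim_ident]
    by (rule filterlim_compose[OF lim])
  have "((\<lambda>t. \<phi> ((x + y) * t) + \<phi> (\<bar>x - y\<bar> * t) - 2 * \<phi> (max x y * t))
      \<longlongrightarrow> 0 + 0 - 2 * 0) at_top"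
    using assms by (intro tendsto_intros dilation) auto
  then show ?thesis
    by (simp add: Lambda_def)
qed

lemma Q32_cong_nonneg:
  assumes "\<And>x. x \<ge> 0 \<Longrightarrow> \<phi> x = \<psi> x"
  shows "Q32 \<phi> G = Q32 \<psi> G"
  unfolding Q32_def set_lebesgue_integral_def Lambda_def
  by (intro Bochner_Integration.integral_cong refl) (auto simp: indicator_def assms)

lemma AE_pair_measure_fst_neq_snd:
  fixes M :: "real measure"
  assumes "sigma_finite_measure M" and sets: "sets M = sets borel" and "S \<in> sets borel"
    and atomless: "\<And>x. x \<in> S \<Longrightarrow> emeasure M {x} = 0"
  shows "AE p in M \<Otimes>\<^sub>M M. fst p \<in> S \<longrightarrow> fst p \<noteq> snd p"
proof -
  interpret pair_sigma_finite M M
    using assms(1) by (simp add: pair_sigma_finite_def)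
  have [measurable]: "S \<in> sets M" using sets assms(3) by simp
  show ?thesis
  proof (rule AE_pair_measure)
    show "{p \<in> space (M \<Otimes>\<^sub>M M). fst p \<in> S \<longrightarrow> fst p \<noteq> snd p} \<in> sets (M \<Otimes>\<^sub>M M)"
      using sets by measurable
    show "AE x in M. AE y in M. fst (x, y) \<in> S \<longrightarrow> fst (x, y) \<noteq> snd (x, y)"
    proof (rule AE_I2)
      fix x
      show "AE y in M. fst (x, y) \<in> S \<longrightarrow> fst (x, y) \<noteq> snd (x, y)"
      proof (cases "x \<in> S")
        case True
        then have "{x} \<in> null_sets M"
          using atomless sets by (intro null_setsI) auto
        then show ?thesis by (rule AE_I') auto
      qed simp
    qed
  qed
qed

lemma (in pair_sigma_finite) integrable_mult_fst_snd:
  fixes f g :: "_ \<Rightarrow> real"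
  assumes f: "integrable M1 f" and g: "integrable M2 g"
  shows "integrable (M1 \<Otimes>\<^sub>M M2) (\<lambda>p. f (fst p) * g (snd p))"
proof (rule Fubini_integrable)
  have [measurable]: "f \<in> borel_measurable M1" "g \<in> borel_measurable M2"
    using f g by auto
  show "(\<lambda>p. f (fst p) * g (snd p)) \<in> borel_measurable (M1 \<Otimes>\<^sub>M M2)"
    by measurable
  show "integrable M1 (\<lambda>x. \<integral>y. norm (f (fst (x, y)) * g (snd (x, y))) \<partial>M2)"
    using f by (simp add: abs_mult)
  show "AE x in M1. integrable M2 (\<lambda>y. f (fst (x, y)) * g (snd (x, y)))"
    using g by simp
qed

lemma Q32_dilation_tendsto_0:
  fixes G :: "real measure" and \<psi> :: "real \<Rightarrow> real"
  assumes "sigma_finite_measure G" and sets: "sets G = sets borel"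
    and atomless: "\<And>x. x > 0 \<Longrightarrow> emeasure G {x} = 0"
    and weight: "(\<integral>\<^sup>+ x \<in> {0<..}. ennreal (1 / sqrt x) \<partial>G) < \<infinity>"
    and [measurable]: "\<psi> \<in> borel_measurable borel"
    and bound: "\<And>z. z \<ge> 0 \<Longrightarrow> \<bar>\<psi> z\<bar> \<le> B" and lim: "(\<psi> \<longlongrightarrow> 0) at_top"
  shows "((\<lambda>t. Q32 (\<lambda>z. \<psi> (z * t)) G) \<longlongrightarrow> 0) at_top"
proof -
  interpret pair_sigma_finite G G
    using assms(1) by (simp add: pair_sigma_finite_def)
  define A :: "(real \<times> real) set" where "A = {0<..} \<times> {0<..}"
  define h :: "real \<Rightarrow> real" where "h x = indicator {0<..} x / sqrt x" for x
  define s where "s t p = indicator A p *\<^sub>R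
      (Lambda (\<lambda>z. \<psi> (z * t)) (fst p) (snd p) / sqrt (fst p * snd p))" for t p
  have sets_GG: "sets (G \<Otimes>\<^sub>M G) = sets (borel \<Otimes>\<^sub>M borel)"
    using sets by (intro sets_pair_measure_cong)
  have [measurable]: "h \<in> borel_measurable G"
    unfolding measurable_cong_sets[OF sets refl] h_def by measurable
  have "integrable G h"
  proof (rule integrableI_nonneg)
    have "(\<integral>\<^sup>+ x. ennreal (h x) \<partial>G) = (\<integral>\<^sup>+ x \<in> {0<..}. ennreal (1 / sqrt x) \<partial>G)"
      by (intro nn_integral_cong) (simp add: h_def indicator_def)
    then show "(\<integral>\<^sup>+ x. ennreal (h x) \<partial>G) < \<infinity>"
      using weight by simp
  qed (auto simp: h_def indicator_def)
  then have dominating: "integrable (G \<Otimes>\<^sub>M G) (\<lambda>p. 4 * B * (h (fst p) * h (snd p)))"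
    by (intro integrable_mult_right integrable_mult_fst_snd)
  have "((\<lambda>t. integral\<^sup>L (G \<Otimes>\<^sub>M G) (s t))
      \<longlongrightarrow> integral\<^sup>L (G \<Otimes>\<^sub>M G) (\<lambda>_. 0::real)) at_top"
  proof (rule integral_dominated_convergence_at_top[OF _ _ dominating])
    show "s t \<in> borel_measurable (G \<Otimes>\<^sub>M G)" for t
      unfolding measurable_cong_sets[OF sets_GG refl] s_def A_def Lambda_def by measurable
    have "AE p in G \<Otimes>\<^sub>M G. fst p \<in> {0<..} \<longrightarrow> fst p \<noteq> snd p"
      using assms(1) sets atomless by (intro AE_pair_measure_fst_neq_snd) auto
    then show "AE p in G \<Otimes>\<^sub>M G. ((\<lambda>t. s t p) \<longlongrightarrow> 0) at_top"
    proof eventually_elim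
      case (elim p)
      show ?case
      proof (cases "p \<in> A")
        case True
        with elim have "fst p > 0" "snd p > 0" "fst p \<noteq> snd p"
          by (auto simp: A_def mem_Times_iff)
        then have "((\<lambda>t. Lambda (\<lambda>z. \<psi> (z * t)) (fst p) (snd p) / sqrt (fst p * snd p))
            \<longlongrightarrow> 0 / sqrt (fst p * snd p)) at_top"
          by (intro tendsto_divide Lambda_dilation_tendsto_0[OF lim] tendsto_const) auto
        with True show ?thesis
          by (simp add: s_def)
      qed (simp add: s_def)
    qed
    show "\<forall>\<^sub>F t in at_top. AE p in G \<Otimes>\<^sub>M G. norm (s t p) \<le> 4 * B * (h (fst p) * h (snd p))"
    proof (intro eventually_mono[OF eventually_ge_at_top[of 0]] AE_I2)
      fix t :: real and p :: "real \<times> real"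
      assume "t \<ge> 0"
      show "norm (s t p) \<le> 4 * B * (h (fst p) * h (snd p))"
      proof (cases "p \<in> A")
        case True
        then have "fst p > 0" "snd p > 0"
          by (auto simp: A_def mem_Times_iff)
        moreover have "\<bar>Lambda (\<lambda>z. \<psi> (z * t)) (fst p) (snd p)\<bar> \<le> 4 * B"
          using \<open>t \<ge> 0\<close> calculation by (intro abs_Lambda_le bound) auto
        ultimately show ?thesis
          using True by (simp add: s_def h_def abs_divide real_sqrt_mult divide_right_mono)
      qed (auto simp: s_def h_def A_def indicator_def mem_Times_iff)
    qed
  qed simp
  moreover have "Q32 (\<lambda>z. \<psi> (z * t)) G = integral\<^sup>L (G \<Otimes>\<^sub>M G) (s t)" for t
    unfolding Q32_def set_lebesgue_integral_def s_def A_def ..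
  ultimately show ?thesis
    by simp
qed

theorem mainTheorem17:
  fixes G :: "real measure" and \<phi> :: "real \<Rightarrow> real"
  assumes "nonneg_finite_measure G"
    and "\<forall>x>0. emeasure G {x} = 0"
    and "(\<integral>\<^sup>+ x \<in> {0<..}. ennreal (1 / sqrt x) \<partial>G) < \<infinity>"
    and "admissible_profile \<phi>"
  shows "((\<lambda>\<epsilon>. Q32 (\<lambda>x. \<phi> (x / \<epsilon>)) G) \<longlongrightarrow> 0) (at_right 0)"
proof -
  have sets: "sets G = sets borel" and finite: "finite_measure G"
    using assms(1) by (auto simp: nonneg_finite_measure_def)
  interpret finite_measure G by (rule finite)
  obtain \<phi>' where deriv: "\<And>x. x \<ge> 0 \<Longrightarrow> (\<phi> has_real_derivative \<phi>' x) (at x within {0..})"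
    and "bounded (\<phi> ` {0..})" and sqrt_lim: "((\<lambda>x. sqrt x * \<phi> x) \<longlongrightarrow> 0) at_top"
    using assms(4) by (auto simp: admissible_profile_def C1b_nonneg_def)
  then obtain B where bound: "\<And>x. x \<ge> 0 \<Longrightarrow> \<bar>\<phi> x\<bar> \<le> B"
    by (auto simp: bounded_pos)
  \<comment> \<open>a continuous, hence Borel, extension of \<open>\<phi>\<close> to the whole line\<close>
  define \<psi> where "\<psi> x = \<phi> (max x 0)" for x
  have "continuous_on {0..} \<phi>"
    using deriv by (intro DERIV_continuous_on) auto
  then have "continuous_on UNIV \<psi>"
    unfolding \<psi>_def by (rule continuous_on_compose2) (auto intro!: continuous_intros)
  moreover have "(\<psi> \<longlongrightarrow> 0) at_top"
    using tendsto_0_at_top_if_sqrt_mult_tendsto_0[OF sqrt_lim]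
    by (rule Lim_transform_eventually)
      (auto simp: \<psi>_def intro: eventually_mono[OF eventually_ge_at_top[of 0]])
  moreover have "\<bar>\<psi> z\<bar> \<le> B" if "z \<ge> 0" for z
    using bound that by (simp add: \<psi>_def)
  ultimately have "((\<lambda>t. Q32 (\<lambda>z. \<psi> (z * t)) G) \<longlongrightarrow> 0) at_top"
    using sigma_finite_measure_axioms sets assms(2,3)
    by (intro Q32_dilation_tendsto_0 borel_measurable_continuous_onI) auto
  moreover have "\<forall>\<^sub>F t in at_top. Q32 (\<lambda>z. \<psi> (z * t)) G = Q32 (\<lambda>x. \<phi> (x / inverse t)) G"
    using eventually_gt_at_top[of 0]
    by eventually_elim (intro Q32_cong_nonneg, simp add: \<psi>_def divide_inverse)
  ultimately show ?thesis
    unfolding filterlim_at_right_to_top by (rule Lim_transform_eventually)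
qed

end
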